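(* Let $R$ be a von Neumann regular ring and $M$ a right $R$-module, and let $A=\mathrm{Ann}_R(M)$. Then $M$ is $\Sigma$-$\aleph_0$-injective if and only if $R/A$ is an Artinian ring.
   Context: A right $R$-module $N$ is $\aleph_0$-injective if every $R$-homomorphism from a countably generated right ideal of $R$ into $N$ extends to $R$. $M$ is $\Sigma$-$\aleph_0$-injective if the direct sum $M^{(\Lambda)}$ of $\Lambda$ copies of $M$ is $\aleph_0$-injective for every index set $\Lambda$. $\mathrm{Ann}_R(M)=\{r\in R: Mr=0\}$. *)

theory Defs
  imports "HOL-Algebra.Algebra" "HOL-Library.Countable_Set"
begin

text \<open>The module carries its additive abelian group in the add/zero fields of a
  ring record (mult/one of the module are unused); the right action is rsmult.\<close>

record ('a, 'b) rmodule = "'b ring" +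
  rsmult :: "'b \<Rightarrow> 'a \<Rightarrow> 'b"

definition right_module :: "('a, 'c) ring_scheme \<Rightarrow> ('a, 'b, 'd) rmodule_scheme \<Rightarrow> bool" where
  "right_module R M \<longleftrightarrow> ring R \<and> abelian_group M \<and>
     (\<forall>x\<in>carrier M. \<forall>r\<in>carrier R. rsmult M x r \<in> carrier M) \<and>
     (\<forall>x\<in>carrier M. \<forall>y\<in>carrier M. \<forall>r\<in>carrier R.
        rsmult M (x \<oplus>\<^bsub>M\<^esub> y) r = rsmult M x r \<oplus>\<^bsub>M\<^esub> rsmult M y r) \<and>
     (\<forall>x\<in>carrier M. \<forall>r\<in>carrier R. \<forall>s\<in>carrier R.
        rsmult M x (r \<oplus>\<^bsub>R\<^esub> s) = rsmult M x r \<oplus>\<^bsub>M\<^esub> rsmult M x s) \<and>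
     (\<forall>x\<in>carrier M. \<forall>r\<in>carrier R. \<forall>s\<in>carrier R.
        rsmult M (rsmult M x r) s = rsmult M x (r \<otimes>\<^bsub>R\<^esub> s)) \<and>
     (\<forall>x\<in>carrier M. rsmult M x \<one>\<^bsub>R\<^esub> = x)"

definition von_neumann_regular :: "('a, 'c) ring_scheme \<Rightarrow> bool" where
  "von_neumann_regular R \<longleftrightarrow> ring R \<and>
     (\<forall>a\<in>carrier R. \<exists>x\<in>carrier R. a \<otimes>\<^bsub>R\<^esub> x \<otimes>\<^bsub>R\<^esub> a = a)"

definition right_ideal :: "'a set \<Rightarrow> ('a, 'c) ring_scheme \<Rightarrow> bool" where
  "right_ideal I R \<longleftrightarrow> additive_subgroup I R \<and>
     (\<forall>x\<in>I. \<forall>r\<in>carrier R. x \<otimes>\<^bsub>R\<^esub> r \<in> I)"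

definition right_ideal_gen :: "('a, 'c) ring_scheme \<Rightarrow> 'a set \<Rightarrow> 'a set" where
  "right_ideal_gen R S = \<Inter>{J. right_ideal J R \<and> S \<subseteq> J}"

definition countably_generated_right_ideal :: "'a set \<Rightarrow> ('a, 'c) ring_scheme \<Rightarrow> bool" where
  "countably_generated_right_ideal I R \<longleftrightarrow> right_ideal I R \<and>
     (\<exists>S. countable S \<and> S \<subseteq> carrier R \<and> I = right_ideal_gen R S)"

definition rhom_on :: "('a, 'c) ring_scheme \<Rightarrow> 'a set \<Rightarrow> ('a, 'b, 'd) rmodule_scheme \<Rightarrow> ('a \<Rightarrow> 'b) \<Rightarrow> bool" where
  "rhom_on R I N f \<longleftrightarrow>
     (\<forall>x\<in>I. f x \<in> carrier N) \<and>
     (\<forall>x\<in>I. \<forall>y\<in>I. f (x \<oplus>\<^bsub>R\<^esub> y) = f x \<oplus>\<^bsub>N\<^esub> f y) \<and>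
     (\<forall>x\<in>I. \<forall>r\<in>carrier R. f (x \<otimes>\<^bsub>R\<^esub> r) = rsmult N (f x) r)"

definition aleph0_injective :: "('a, 'c) ring_scheme \<Rightarrow> ('a, 'b, 'd) rmodule_scheme \<Rightarrow> bool" where
  "aleph0_injective R N \<longleftrightarrow>
     (\<forall>I f. countably_generated_right_ideal I R \<and> rhom_on R I N f \<longrightarrow>
        (\<exists>g. rhom_on R (carrier R) N g \<and> (\<forall>x\<in>I. g x = f x)))"

definition dsum :: "('a, 'b, 'd) rmodule_scheme \<Rightarrow> 'i set \<Rightarrow> ('a, 'i \<Rightarrow> 'b) rmodule" where
  "dsum M \<Lambda> = \<lparr> carrier = {f. f \<in> extensional \<Lambda> \<and> (\<forall>i\<in>\<Lambda>. f i \<in> carrier M) \<and>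
                                finite {i\<in>\<Lambda>. f i \<noteq> \<zero>\<^bsub>M\<^esub>}},
                 monoid.mult = (\<lambda>f g. undefined), monoid.one = undefined,
                 ring.zero = (\<lambda>i\<in>\<Lambda>. \<zero>\<^bsub>M\<^esub>),
                 ring.add = (\<lambda>f g. \<lambda>i\<in>\<Lambda>. f i \<oplus>\<^bsub>M\<^esub> g i),
                 rsmult = (\<lambda>f r. \<lambda>i\<in>\<Lambda>. rsmult M (f i) r) \<rparr>"

definition sigma_aleph0_injective :: "'i itself \<Rightarrow> ('a, 'c) ring_scheme \<Rightarrow> ('a, 'b, 'd) rmodule_scheme \<Rightarrow> bool" where
  "sigma_aleph0_injective _ R M \<longleftrightarrow> (\<forall>\<Lambda>::'i set. aleph0_injective R (dsum M \<Lambda>))"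

definition Ann :: "('a, 'c) ring_scheme \<Rightarrow> ('a, 'b, 'd) rmodule_scheme \<Rightarrow> 'a set" where
  "Ann R M = {r\<in>carrier R. \<forall>x\<in>carrier M. rsmult M x r = \<zero>\<^bsub>M\<^esub>}"

definition artinian_ring :: "('a, 'c) ring_scheme \<Rightarrow> bool" where
  "artinian_ring R \<longleftrightarrow> ring R \<and>
     (\<forall>I :: nat \<Rightarrow> 'a set. (\<forall>n. right_ideal (I n) R) \<and> (\<forall>n. I (Suc n) \<subseteq> I n)
        \<longrightarrow> (\<exists>n. \<forall>m\<ge>n. I m = I n))"

end

theory Submission
  imports Defs
begin

(* By the correspondence theorem, R/A is Artinian iff the right ideals of R containing A
   satisfy DCC ("dcc_above R A").  The argument rests on idempotent calculus in regular
   rings: for an idempotent e and any b there is an idempotent g orthogonal to e with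
   (e + g) b = b ("orth_absorber"), and iterating this builds increasing chains of
   idempotents with pairwise orthogonal increments.

   (<=) A countably generated right ideal I is exhausted by an increasing chain of
   idempotents e_n in I.  DCC applied to {x. e_n x in A} makes the chain constant modulo A
   from some N on, and then x |-> f (e_N x) extends any homomorphism f: I -> N, for any
   module N annihilated by A, e.g. every direct sum of copies of M.

   (=>) If DCC fails, either some right ideal is not of the form eR + A with e in it an
   idempotent, or a strictly descending chain of right ideals splits into a descending
   chain of idempotents.  Both yield infinitely many orthogonal idempotents g_k outside A,
   and the homomorphism x |-> (m_k g_k x)_k on the right ideal they generate does not extend
   to R, contradicting aleph_0-injectivity of a countable direct sum of copies of M. *)

context ring begin

lemma rsmult_closed:
  "right_module R M \<Longrightarrow> x \<in> carrier M \<Longrightarrow> r \<in> carrier R \<Longrightarrow> rsmult M x r \<in> carrier M"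
  unfolding right_module_def by blast

lemma right_module_abelian_group: "right_module R M \<Longrightarrow> abelian_group M"
  unfolding right_module_def by blast

lemma rsmult_add_vector:
  "right_module R M \<Longrightarrow> x \<in> carrier M \<Longrightarrow> y \<in> carrier M \<Longrightarrow> r \<in> carrier R \<Longrightarrow>
   rsmult M (x \<oplus>\<^bsub>M\<^esub> y) r = rsmult M x r \<oplus>\<^bsub>M\<^esub> rsmult M y r"
  unfolding right_module_def by blast

lemma rsmult_add_scalar:
  "right_module R M \<Longrightarrow> x \<in> carrier M \<Longrightarrow> r \<in> carrier R \<Longrightarrow> s \<in> carrier R \<Longrightarrow>
   rsmult M x (r \<oplus> s) = rsmult M x r \<oplus>\<^bsub>M\<^esub> rsmult M x s"
  unfolding right_module_def by blast

lemma rsmult_assoc: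
  "right_module R M \<Longrightarrow> x \<in> carrier M \<Longrightarrow> r \<in> carrier R \<Longrightarrow> s \<in> carrier R \<Longrightarrow>
   rsmult M (rsmult M x r) s = rsmult M x (r \<otimes> s)"
  unfolding right_module_def by blast

lemma rsmult_one: "right_module R M \<Longrightarrow> x \<in> carrier M \<Longrightarrow> rsmult M x \<one> = x"
  unfolding right_module_def by blast

lemma rsmult_zero_scalar:
  assumes m: "right_module R M" and x: "x \<in> carrier M"
  shows "rsmult M x \<zero> = \<zero>\<^bsub>M\<^esub>"
proof -
  interpret M: abelian_group M using right_module_abelian_group[OF m] .
  have "rsmult M x \<zero> \<oplus>\<^bsub>M\<^esub> rsmult M x \<zero> = rsmult M x \<zero>"
    using rsmult_add_scalar[OF m x zero_closed zero_closed] by simp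
  then show ?thesis using rsmult_closed[OF m x zero_closed] by simp
qed

lemma rsmult_zero_vector:
  assumes m: "right_module R M" and r: "r \<in> carrier R"
  shows "rsmult M \<zero>\<^bsub>M\<^esub> r = \<zero>\<^bsub>M\<^esub>"
proof -
  interpret M: abelian_group M using right_module_abelian_group[OF m] .
  have "rsmult M \<zero>\<^bsub>M\<^esub> r \<oplus>\<^bsub>M\<^esub> rsmult M \<zero>\<^bsub>M\<^esub> r = rsmult M \<zero>\<^bsub>M\<^esub> r"
    using rsmult_add_vector[OF m M.zero_closed M.zero_closed r] by simp
  then show ?thesis using rsmult_closed[OF m M.zero_closed r] by simp
qed

lemma rsmult_neg_scalar:
  assumes m: "right_module R M" and x: "x \<in> carrier M" and r: "r \<in> carrier R"
  shows "rsmult M x (\<ominus> r) = \<ominus>\<^bsub>M\<^esub> rsmult M x r"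
proof -
  interpret M: abelian_group M using right_module_abelian_group[OF m] .
  have "rsmult M x r \<oplus>\<^bsub>M\<^esub> rsmult M x (\<ominus> r) = rsmult M x (r \<oplus> \<ominus> r)"
    using rsmult_add_scalar[OF m x r] r by simp
  also have "\<dots> = \<zero>\<^bsub>M\<^esub>" using r rsmult_zero_scalar[OF m x] by (simp add: r_neg)
  finally show ?thesis using rsmult_closed[OF m x] r
    by (metis M.minus_equality M.a_comm a_inv_closed)
qed

end

lemma dsum_carrier:
  "v \<in> carrier (dsum M \<Lambda>) \<longleftrightarrow>
     v \<in> extensional \<Lambda> \<and> (\<forall>i\<in>\<Lambda>. v i \<in> carrier M) \<and> finite {i\<in>\<Lambda>. v i \<noteq> \<zero>\<^bsub>M\<^esub>}"
  by (simp add: dsum_def)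

lemma dsum_add: "v \<oplus>\<^bsub>dsum M \<Lambda>\<^esub> w = (\<lambda>i\<in>\<Lambda>. v i \<oplus>\<^bsub>M\<^esub> w i)"
  by (simp add: dsum_def)

lemma dsum_rsmult: "rsmult (dsum M \<Lambda>) v r = (\<lambda>i\<in>\<Lambda>. rsmult M (v i) r)"
  by (simp add: dsum_def)

lemma dsum_zero: "\<zero>\<^bsub>dsum M \<Lambda>\<^esub> = (\<lambda>i\<in>\<Lambda>. \<zero>\<^bsub>M\<^esub>)"
  by (simp add: dsum_def)

lemma dsum_right_module:
  assumes m: "right_module R M"
  shows "right_module R (dsum M \<Lambda>)"
proof -
  interpret R: ring R using m unfolding right_module_def by blast
  interpret M: abelian_group M using R.right_module_abelian_group[OF m] .
  let ?D = "dsum M \<Lambda>"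
  let ?supp = "\<lambda>v. {i\<in>\<Lambda>. v i \<noteq> \<zero>\<^bsub>M\<^esub>}"
  have D: "v \<in> carrier ?D \<Longrightarrow> i \<in> \<Lambda> \<Longrightarrow> v i \<in> carrier M" for v i
    by (simp add: dsum_carrier)
  have ext: "v \<in> carrier ?D \<Longrightarrow> w \<in> carrier ?D \<Longrightarrow> (\<And>i. i \<in> \<Lambda> \<Longrightarrow> v i = w i) \<Longrightarrow> v = w"
    for v w by (auto simp: dsum_carrier intro: extensionalityI)
  have add_closed: "v \<oplus>\<^bsub>?D\<^esub> w \<in> carrier ?D" if "v \<in> carrier ?D" "w \<in> carrier ?D" for v w
  proof -
    have "?supp (v \<oplus>\<^bsub>?D\<^esub> w) \<subseteq> ?supp v \<union> ?supp w"
      using that by (auto simp: dsum_add dsum_carrier)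
    moreover have "finite (?supp v \<union> ?supp w)" using that by (simp add: dsum_carrier)
    ultimately have "finite (?supp (v \<oplus>\<^bsub>?D\<^esub> w))" by (rule finite_subset)
    then show ?thesis using that by (auto simp: dsum_add dsum_carrier)
  qed
  have rsmult_closed: "rsmult ?D v r \<in> carrier ?D" if "v \<in> carrier ?D" "r \<in> carrier R" for v r
  proof -
    have "?supp (rsmult ?D v r) \<subseteq> ?supp v"
      using that R.rsmult_zero_vector[OF m] by (auto simp: dsum_rsmult)
    moreover have "finite (?supp v)" using that by (simp add: dsum_carrier)
    ultimately have "finite (?supp (rsmult ?D v r))" by (rule finite_subset)
    then show ?thesis using that R.rsmult_closed[OF m] by (auto simp: dsum_rsmult dsum_carrier)
  qed
  have group: "abelian_group ?D"
  proof (rule abelian_groupI)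
    show "\<zero>\<^bsub>?D\<^esub> \<in> carrier ?D" by (simp add: dsum_zero dsum_carrier)
  next
    fix v assume v: "v \<in> carrier ?D"
    let ?w = "\<lambda>i\<in>\<Lambda>. \<ominus>\<^bsub>M\<^esub> v i"
    have "?supp ?w = ?supp v" using D[OF v] by auto
    then have "?w \<in> carrier ?D" using v by (auto simp: dsum_carrier)
    moreover have "?w \<oplus>\<^bsub>?D\<^esub> v = \<zero>\<^bsub>?D\<^esub>"
      unfolding dsum_add dsum_zero by (rule restrict_ext) (simp add: D[OF v] M.l_neg)
    ultimately show "\<exists>w\<in>carrier ?D. w \<oplus>\<^bsub>?D\<^esub> v = \<zero>\<^bsub>?D\<^esub>" by blast
    show "\<zero>\<^bsub>?D\<^esub> \<oplus>\<^bsub>?D\<^esub> v = v"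
      using v by (intro ext add_closed) (auto simp: dsum_add dsum_zero dsum_carrier D)
  next
    fix u v w assume "u \<in> carrier ?D" "v \<in> carrier ?D" "w \<in> carrier ?D"
    then show "u \<oplus>\<^bsub>?D\<^esub> v \<oplus>\<^bsub>?D\<^esub> w = u \<oplus>\<^bsub>?D\<^esub> (v \<oplus>\<^bsub>?D\<^esub> w)"
      unfolding dsum_add by (intro restrict_ext) (simp add: D M.a_assoc)
  next
    fix v w assume "v \<in> carrier ?D" "w \<in> carrier ?D"
    then show "v \<oplus>\<^bsub>?D\<^esub> w = w \<oplus>\<^bsub>?D\<^esub> v"
      unfolding dsum_add by (intro restrict_ext) (simp add: D M.a_comm)
  qed (rule add_closed)
  have add_vector: "rsmult ?D (v \<oplus>\<^bsub>?D\<^esub> w) r = rsmult ?D v r \<oplus>\<^bsub>?D\<^esub> rsmult ?D w r"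
    if "v \<in> carrier ?D" "w \<in> carrier ?D" "r \<in> carrier R" for v w r
    unfolding dsum_add dsum_rsmult using that
    by (intro restrict_ext) (simp add: D R.rsmult_add_vector[OF m])
  have add_scalar: "rsmult ?D v (r \<oplus>\<^bsub>R\<^esub> s) = rsmult ?D v r \<oplus>\<^bsub>?D\<^esub> rsmult ?D v s"
    if "v \<in> carrier ?D" "r \<in> carrier R" "s \<in> carrier R" for v r s
    unfolding dsum_add dsum_rsmult using that
    by (intro restrict_ext) (simp add: D R.rsmult_add_scalar[OF m])
  have assoc: "rsmult ?D (rsmult ?D v r) s = rsmult ?D v (r \<otimes>\<^bsub>R\<^esub> s)"
    if "v \<in> carrier ?D" "r \<in> carrier R" "s \<in> carrier R" for v r s
    unfolding dsum_rsmult using that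
    by (intro restrict_ext) (simp add: D R.rsmult_assoc[OF m])
  have one: "rsmult ?D v \<one>\<^bsub>R\<^esub> = v" if "v \<in> carrier ?D" for v
    using that by (intro ext rsmult_closed) (simp_all add: dsum_rsmult D R.rsmult_one[OF m])
  show ?thesis
    unfolding right_module_def
    using R.ring_axioms group rsmult_closed add_vector add_scalar assoc one by (intro conjI ballI)
qed

context ring begin

lemma right_idealI:
  assumes "J \<subseteq> carrier R" "\<zero> \<in> J" "\<And>x y. x \<in> J \<Longrightarrow> y \<in> J \<Longrightarrow> x \<oplus> y \<in> J"
    "\<And>x. x \<in> J \<Longrightarrow> \<ominus> x \<in> J" "\<And>x r. x \<in> J \<Longrightarrow> r \<in> carrier R \<Longrightarrow> x \<otimes> r \<in> J"
  shows "right_ideal J R"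
proof -
  have "subgroup J (add_monoid R)"
    by (rule add.subgroupI) (use assms in \<open>auto simp: a_inv_def\<close>)
  then show ?thesis
    unfolding right_ideal_def using assms(5) by (simp add: additive_subgroup.intro)
qed

lemma right_ideal_additive_subgroup: "right_ideal J R \<Longrightarrow> additive_subgroup J R"
  unfolding right_ideal_def by (erule conjE)

lemma right_ideal_subset: "right_ideal J R \<Longrightarrow> J \<subseteq> carrier R"
  by (rule additive_subgroup.a_subset[OF right_ideal_additive_subgroup])

lemma right_ideal_zero: "right_ideal J R \<Longrightarrow> \<zero> \<in> J"
  by (rule additive_subgroup.zero_closed[OF right_ideal_additive_subgroup])

lemma right_ideal_add: "right_ideal J R \<Longrightarrow> x \<in> J \<Longrightarrow> y \<in> J \<Longrightarrow> x \<oplus> y \<in> J"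
  by (rule additive_subgroup.a_closed[OF right_ideal_additive_subgroup])

lemma right_ideal_neg: "right_ideal J R \<Longrightarrow> x \<in> J \<Longrightarrow> \<ominus> x \<in> J"
  by (rule additive_subgroup.a_inv_closed[OF right_ideal_additive_subgroup])

lemma right_ideal_minus: "right_ideal J R \<Longrightarrow> x \<in> J \<Longrightarrow> y \<in> J \<Longrightarrow> x \<ominus> y \<in> J"
  by (simp add: a_minus_def right_ideal_add right_ideal_neg)

lemma right_ideal_mult: "right_ideal J R \<Longrightarrow> x \<in> J \<Longrightarrow> r \<in> carrier R \<Longrightarrow> x \<otimes> r \<in> J"
  unfolding right_ideal_def by blast

lemma right_ideal_Inter:
  assumes "F \<noteq> {}" "\<And>J. J \<in> F \<Longrightarrow> right_ideal J R"
  shows "right_ideal (\<Inter>F) R"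
proof (rule right_idealI)
  show "\<Inter> F \<subseteq> carrier R" using assms right_ideal_subset by blast
  show "\<zero> \<in> \<Inter> F" using assms(2) right_ideal_zero by blast
  show "x \<oplus> y \<in> \<Inter> F" if "x \<in> \<Inter> F" "y \<in> \<Inter> F" for x y
    using that assms(2) right_ideal_add by blast
  show "\<ominus> x \<in> \<Inter> F" if "x \<in> \<Inter> F" for x
    using that assms(2) right_ideal_neg by blast
  show "x \<otimes> r \<in> \<Inter> F" if "x \<in> \<Inter> F" "r \<in> carrier R" for x r
    using that assms(2) right_ideal_mult by blast
qed


lemma right_ideal_Int: "right_ideal I R \<Longrightarrow> right_ideal J R \<Longrightarrow> right_ideal (I \<inter> J) R"
  using right_ideal_Inter[of "{I, J}"] by auto

lemma right_ideal_carrier: "right_ideal (carrier R) R"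
  by (rule right_idealI) simp_all

lemma right_ideal_gen_right_ideal: "S \<subseteq> carrier R \<Longrightarrow> right_ideal (right_ideal_gen R S) R"
  unfolding right_ideal_gen_def by (rule right_ideal_Inter) (use right_ideal_carrier in auto)

lemma right_ideal_gen_incl: "S \<subseteq> right_ideal_gen R S"
  unfolding right_ideal_gen_def by blast

lemma right_ideal_gen_min: "right_ideal J R \<Longrightarrow> S \<subseteq> J \<Longrightarrow> right_ideal_gen R S \<subseteq> J"
  unfolding right_ideal_gen_def by blast

lemma right_ideal_principal:
  assumes e: "e \<in> carrier R"
  shows "right_ideal {e \<otimes> r |r. r \<in> carrier R} R"
proof (rule right_idealI)
  show "\<zero> \<in> {e \<otimes> r |r. r \<in> carrier R}"
    using e by (metis (mono_tags, lifting) mem_Collect_eq r_null zero_closed)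
next
  fix x y assume "x \<in> {e \<otimes> r |r. r \<in> carrier R}" "y \<in> {e \<otimes> r |r. r \<in> carrier R}"
  then obtain a b where "a \<in> carrier R" "b \<in> carrier R" "x = e \<otimes> a" "y = e \<otimes> b" by blast
  moreover from this have "x \<oplus> y = e \<otimes> (a \<oplus> b)" using e by (simp add: r_distr)
  ultimately show "x \<oplus> y \<in> {e \<otimes> r |r. r \<in> carrier R}" by blast
next
  fix x assume "x \<in> {e \<otimes> r |r. r \<in> carrier R}"
  then obtain a where "a \<in> carrier R" "x = e \<otimes> a" by blast
  moreover from this have "\<ominus> x = e \<otimes> (\<ominus> a)" using e by (simp add: r_minus)
  ultimately show "\<ominus> x \<in> {e \<otimes> r |r. r \<in> carrier R}" by blast
next
  fix x r assume "x \<in> {e \<otimes> r |r. r \<in> carrier R}" and r: "r \<in> carrier R"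
  then obtain a where "a \<in> carrier R" "x = e \<otimes> a" by blast
  moreover from this have "x \<otimes> r = e \<otimes> (a \<otimes> r)" using e r by (simp add: m_assoc)
  ultimately show "x \<otimes> r \<in> {e \<otimes> r |r. r \<in> carrier R}" using r by blast
qed (use e in auto)

lemma Ann_subset: "Ann R M \<subseteq> carrier R"
  unfolding Ann_def by auto

lemma AnnD: "a \<in> Ann R M \<Longrightarrow> x \<in> carrier M \<Longrightarrow> rsmult M x a = \<zero>\<^bsub>M\<^esub>"
  unfolding Ann_def by auto

lemma AnnI: "a \<in> carrier R \<Longrightarrow> (\<And>x. x \<in> carrier M \<Longrightarrow> rsmult M x a = \<zero>\<^bsub>M\<^esub>) \<Longrightarrow> a \<in> Ann R M"
  unfolding Ann_def by auto

lemma Ann_ideal: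
  assumes m: "right_module R M"
  shows "ideal (Ann R M) R"
proof -
  interpret M: abelian_group M using right_module_abelian_group[OF m] .
  have Ann_carrier: "a \<in> carrier R" if "a \<in> Ann R M" for a
    using that Ann_subset by blast
  have right: "right_ideal (Ann R M) R"
  proof (rule right_idealI)
    fix x y assume x: "x \<in> Ann R M" and y: "y \<in> Ann R M"
    then show "x \<oplus> y \<in> Ann R M"
      using Ann_carrier rsmult_add_scalar[OF m] AnnD[OF x] AnnD[OF y] by (auto intro!: AnnI)
  next
    fix x r assume x: "x \<in> Ann R M" and r: "r \<in> carrier R"
    then show "x \<otimes> r \<in> Ann R M"
      using Ann_carrier rsmult_assoc[OF m, symmetric] AnnD[OF x] rsmult_zero_vector[OF m r]
      by (auto intro!: AnnI)
  next
    fix x assume x: "x \<in> Ann R M"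
    then show "\<ominus> x \<in> Ann R M"
      using Ann_carrier rsmult_neg_scalar[OF m] AnnD[OF x] by (auto intro!: AnnI)
  qed (use Ann_carrier rsmult_zero_scalar[OF m] in \<open>auto intro!: AnnI\<close>)
  show ?thesis
  proof (rule idealI)
    show "subgroup (Ann R M) (add_monoid R)"
      using right_ideal_additive_subgroup[OF right] by (rule additive_subgroup.a_subgroup)
    fix a x assume a: "a \<in> Ann R M" and x: "x \<in> carrier R"
    then show "x \<otimes> a \<in> Ann R M"
      using Ann_carrier rsmult_assoc[OF m, symmetric] AnnD[OF a] rsmult_closed[OF m] by (auto intro!: AnnI)
    show "a \<otimes> x \<in> Ann R M" using right_ideal_mult[OF right a x] .
  qed (rule ring_axioms)
qed

lemma Ann_dsum: "Ann R M \<subseteq> Ann R (dsum M \<Lambda>)"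
proof
  fix a assume a: "a \<in> Ann R M"
  have "rsmult (dsum M \<Lambda>) v a = \<zero>\<^bsub>dsum M \<Lambda>\<^esub>" if "v \<in> carrier (dsum M \<Lambda>)" for v
    unfolding dsum_rsmult dsum_zero using that AnnD[OF a] by (intro restrict_ext) (simp add: dsum_carrier)
  then show "a \<in> Ann R (dsum M \<Lambda>)" using a Ann_subset by (auto intro!: AnnI)
qed

end

definition dcc_above :: "('a, 'c) ring_scheme \<Rightarrow> 'a set \<Rightarrow> bool" where
  "dcc_above R A \<longleftrightarrow> (\<forall>I :: nat \<Rightarrow> 'a set.
     (\<forall>n. right_ideal (I n) R \<and> A \<subseteq> I n) \<and> (\<forall>n. I (Suc n) \<subseteq> I n)
        \<longrightarrow> (\<exists>n. \<forall>m\<ge>n. I m = I n))"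

context ring begin

lemma quotient_facts:
  assumes A: "ideal A R"
  shows "ring (R Quot A)" "ring_hom_ring R (R Quot A) ((+>) A)"
    "carrier (R Quot A) = (+>) A ` carrier R"
  using ideal.quotient_is_ring[OF A] ideal.rcos_ring_hom_ring[OF A]
  by (auto simp: FactRing_def A_RCOSETS_def')

lemma quotient_image_right_ideal:
  assumes A: "ideal A R" and J: "right_ideal J R"
  shows "right_ideal ((+>) A ` J) (R Quot A)"
proof -
  interpret Q: ring "R Quot A" using quotient_facts[OF A] by simp
  interpret H: ring_hom_ring R "R Quot A" "(+>) A" using quotient_facts[OF A] by simp
  have Jc: "J \<subseteq> carrier R" using right_ideal_subset[OF J] .
  show ?thesis
  proof (rule Q.right_idealI)
    show "(+>) A ` J \<subseteq> carrier (R Quot A)" using Jc H.hom_closed by blast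
    have "\<zero>\<^bsub>R Quot A\<^esub> = A +> \<zero>" using H.hom_zero by simp
    thus "\<zero>\<^bsub>R Quot A\<^esub> \<in> (+>) A ` J" using right_ideal_zero[OF J] by blast
  next
    fix U V assume "U \<in> (+>) A ` J" "V \<in> (+>) A ` J"
    then obtain x y where xy: "x \<in> J" "y \<in> J" "U = A +> x" "V = A +> y" by blast
    have xc: "x \<in> carrier R" "y \<in> carrier R" using xy Jc by auto
    have "U \<oplus>\<^bsub>R Quot A\<^esub> V = A +> (x \<oplus> y)" using H.hom_add[OF xc] xy by simp
    thus "U \<oplus>\<^bsub>R Quot A\<^esub> V \<in> (+>) A ` J" using right_ideal_add[OF J xy(1,2)] by blast
  next
    fix U assume "U \<in> (+>) A ` J"
    then obtain x where xy: "x \<in> J" "U = A +> x" by blast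
    have xc: "x \<in> carrier R" using xy Jc by auto
    have "\<ominus>\<^bsub>R Quot A\<^esub> U = A +> (\<ominus> x)" using H.hom_a_inv[OF xc] xy by simp
    thus "\<ominus>\<^bsub>R Quot A\<^esub> U \<in> (+>) A ` J" using right_ideal_neg[OF J xy(1)] by blast
  next
    fix U W assume "U \<in> (+>) A ` J" "W \<in> carrier (R Quot A)"
    then obtain x z where xy: "x \<in> J" "U = A +> x" "z \<in> carrier R" "W = A +> z"
      using quotient_facts(3)[OF A] by blast
    have xc: "x \<in> carrier R" using xy Jc by auto
    have "U \<otimes>\<^bsub>R Quot A\<^esub> W = A +> (x \<otimes> z)" using H.hom_mult[OF xc xy(3)] xy by simp
    thus "U \<otimes>\<^bsub>R Quot A\<^esub> W \<in> (+>) A ` J" using right_ideal_mult[OF J xy(1,3)] by blast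
  qed
qed

lemma quotient_image_reflects_subset:
  assumes A: "ideal A R" and J1: "right_ideal J1 R" and J2: "right_ideal J2 R" and AJ: "A \<subseteq> J2"
    and sub: "(+>) A ` J1 \<subseteq> (+>) A ` J2"
  shows "J1 \<subseteq> J2"
proof
  fix x assume x: "x \<in> J1"
  then obtain y where y: "y \<in> J2" "A +> x = A +> y" using sub by blast
  have xc: "x \<in> carrier R" and yc: "y \<in> carrier R"
    using x y right_ideal_subset[OF J1] right_ideal_subset[OF J2] by auto
  have "x \<ominus> y \<in> A" using quotient_eq_iff_same_a_r_cos[OF A xc yc] y by simp
  hence "x \<ominus> y \<in> J2" using AJ by blast
  hence "(x \<ominus> y) \<oplus> y \<in> J2" using right_ideal_add[OF J2 _ y(1)] by blast
  moreover have "(x \<ominus> y) \<oplus> y = x" using xc yc by (simp add: ring_simprules)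
  ultimately show "x \<in> J2" by simp
qed

lemma quotient_preimage_right_ideal:
  assumes A: "ideal A R" and K: "right_ideal K (R Quot A)"
  shows "right_ideal {x \<in> carrier R. A +> x \<in> K} R" "A \<subseteq> {x \<in> carrier R. A +> x \<in> K}"
    "(+>) A ` {x \<in> carrier R. A +> x \<in> K} = K"
proof -
  interpret Q: ring "R Quot A" using quotient_facts[OF A] by simp
  interpret H: ring_hom_ring R "R Quot A" "(+>) A" using quotient_facts[OF A] by simp
  show "right_ideal {x \<in> carrier R. A +> x \<in> K} R"
  proof (rule right_idealI)
    show "\<zero> \<in> {x \<in> carrier R. A +> x \<in> K}" using Q.right_ideal_zero[OF K] H.hom_zero by simp
  next
    fix x y assume "x \<in> {x \<in> carrier R. A +> x \<in> K}" "y \<in> {x \<in> carrier R. A +> x \<in> K}"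
    thus "x \<oplus> y \<in> {x \<in> carrier R. A +> x \<in> K}" using Q.right_ideal_add[OF K] H.hom_add by auto
  next
    fix x assume "x \<in> {x \<in> carrier R. A +> x \<in> K}"
    thus "\<ominus> x \<in> {x \<in> carrier R. A +> x \<in> K}" using Q.right_ideal_neg[OF K] H.hom_a_inv by auto
  next
    fix x r assume "x \<in> {x \<in> carrier R. A +> x \<in> K}" "r \<in> carrier R"
    thus "x \<otimes> r \<in> {x \<in> carrier R. A +> x \<in> K}" using Q.right_ideal_mult[OF K] H.hom_mult H.hom_closed by auto
  qed auto
  show "A \<subseteq> {x \<in> carrier R. A +> x \<in> K}"
  proof
    fix a assume a: "a \<in> A"
    have ac: "a \<in> carrier R" using ideal.Icarr[OF A a] .
    have "A +> a = A +> \<zero>" using quotient_eq_iff_same_a_r_cos[OF A ac zero_closed] a ac by (simp add: a_minus_def)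
    also have "\<dots> = \<zero>\<^bsub>R Quot A\<^esub>" using H.hom_zero .
    finally show "a \<in> {x \<in> carrier R. A +> x \<in> K}" using ac Q.right_ideal_zero[OF K] by simp
  qed
  show "(+>) A ` {x \<in> carrier R. A +> x \<in> K} = K"
  proof
    show "(+>) A ` {x \<in> carrier R. A +> x \<in> K} \<subseteq> K" by auto
    show "K \<subseteq> (+>) A ` {x \<in> carrier R. A +> x \<in> K}"
    proof
      fix U assume U: "U \<in> K"
      hence "U \<in> (+>) A ` carrier R" using Q.right_ideal_subset[OF K] quotient_facts(3)[OF A] by auto
      then obtain x where "x \<in> carrier R" "U = A +> x" by auto
      thus "U \<in> (+>) A ` {x \<in> carrier R. A +> x \<in> K}" using U by auto
    qed
  qed
qed

lemma artinian_quotient_iff_dcc_above: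
  assumes A: "ideal A R"
  shows "artinian_ring (R Quot A) \<longleftrightarrow> dcc_above R A"
proof
  assume art: "artinian_ring (R Quot A)"
  show "dcc_above R A" unfolding dcc_above_def
  proof (intro allI impI)
    fix I :: "nat \<Rightarrow> 'a set"
    assume "(\<forall>n. right_ideal (I n) R \<and> A \<subseteq> I n) \<and> (\<forall>n. I (Suc n) \<subseteq> I n)"
    then have I: "\<And>n. right_ideal (I n) R" "\<And>n. A \<subseteq> I n" and dec: "\<And>n. I (Suc n) \<subseteq> I n"
      by auto
    define K where "K n = (+>) A ` I n" for n
    have "\<forall>n. right_ideal (K n) (R Quot A)"
      unfolding K_def using quotient_image_right_ideal[OF A I(1)] by blast
    moreover have "\<forall>n. K (Suc n) \<subseteq> K n" unfolding K_def using dec by blast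
    ultimately obtain n where n: "\<forall>m\<ge>n. K m = K n"
      using art unfolding artinian_ring_def by blast
    have "I m = I n" if "m \<ge> n" for m
    proof
      have eq: "(+>) A ` I m = (+>) A ` I n" using n that unfolding K_def by blast
      show "I m \<subseteq> I n" by (rule quotient_image_reflects_subset[OF A I(1) I(1) I(2)]) (simp add: eq)
      show "I n \<subseteq> I m" by (rule quotient_image_reflects_subset[OF A I(1) I(1) I(2)]) (simp add: eq)
    qed
    then show "\<exists>n. \<forall>m\<ge>n. I m = I n" by blast
  qed
next
  assume dcc: "dcc_above R A"
  show "artinian_ring (R Quot A)" unfolding artinian_ring_def
  proof (intro conjI allI impI)
    show "ring (R Quot A)" using quotient_facts[OF A] by simp
    fix K :: "nat \<Rightarrow> 'a set set"
    assume "(\<forall>n. right_ideal (K n) (R Quot A)) \<and> (\<forall>n. K (Suc n) \<subseteq> K n)"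
    then have K: "\<And>n. right_ideal (K n) (R Quot A)" and dec: "\<And>n. K (Suc n) \<subseteq> K n" by auto
    define I where "I n = {x \<in> carrier R. A +> x \<in> K n}" for n
    have "\<forall>n. right_ideal (I n) R \<and> A \<subseteq> I n"
      using quotient_preimage_right_ideal(1,2)[OF A K] unfolding I_def by blast
    moreover have "\<forall>n. I (Suc n) \<subseteq> I n" using dec unfolding I_def by blast
    ultimately obtain n where n: "\<forall>m\<ge>n. I m = I n" using dcc unfolding dcc_above_def by blast
    have "K m = K n" if "m \<ge> n" for m
    proof -
      have "K m = (+>) A ` I m" using quotient_preimage_right_ideal(3)[OF A K] unfolding I_def by simp
      also have "\<dots> = (+>) A ` I n" using n[rule_format, OF that] by simp
      also have "\<dots> = K n" using quotient_preimage_right_ideal(3)[OF A K] unfolding I_def by simp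
      finally show ?thesis .
    qed
    then show "\<exists>n. \<forall>m\<ge>n. K m = K n" by blast
  qed
qed

lemma dcc_above_mono:
  assumes dcc: "dcc_above R A" and AB: "A \<subseteq> B"
  shows "dcc_above R B"
  unfolding dcc_above_def
proof (intro allI impI)
  fix I :: "nat \<Rightarrow> 'a set"
  assume "(\<forall>n. right_ideal (I n) R \<and> B \<subseteq> I n) \<and> (\<forall>n. I (Suc n) \<subseteq> I n)"
  then show "\<exists>n. \<forall>m\<ge>n. I m = I n"
    using dcc[unfolded dcc_above_def, rule_format, of I] AB by blast
qed

end

lemma (in ring) regularE:
  assumes "von_neumann_regular R" "a \<in> carrier R"
  obtains x where "x \<in> carrier R" "a \<otimes> x \<otimes> a = a"
  using assms unfolding von_neumann_regular_def by blast

definition orth_absorber :: "('a, 'c) ring_scheme \<Rightarrow> 'a \<Rightarrow> 'a \<Rightarrow> 'a \<Rightarrow> bool" where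
  "orth_absorber R e b g \<longleftrightarrow> g \<in> carrier R \<and> g \<otimes>\<^bsub>R\<^esub> g = g
     \<and> e \<otimes>\<^bsub>R\<^esub> g = \<zero>\<^bsub>R\<^esub> \<and> g \<otimes>\<^bsub>R\<^esub> e = \<zero>\<^bsub>R\<^esub>
     \<and> (e \<oplus>\<^bsub>R\<^esub> g) \<otimes>\<^bsub>R\<^esub> b = b
     \<and> (\<forall>J. right_ideal J R \<longrightarrow> e \<in> J \<longrightarrow> b \<in> J \<longrightarrow> g \<in> J)
     \<and> g \<otimes>\<^bsub>R\<^esub> ((\<one>\<^bsub>R\<^esub> \<ominus>\<^bsub>R\<^esub> e) \<otimes>\<^bsub>R\<^esub> b) = (\<one>\<^bsub>R\<^esub> \<ominus>\<^bsub>R\<^esub> e) \<otimes>\<^bsub>R\<^esub> b"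

definition absorber :: "('a, 'c) ring_scheme \<Rightarrow> 'a \<Rightarrow> 'a \<Rightarrow> 'a" where
  "absorber R e b = (SOME g. orth_absorber R e b g)"

context ring begin

text \<open>In a regular ring, with c = (1 - e) b and c y c = c, the element g = c y (1 - e)
  is an orthogonal absorber of b over e.\<close>

lemma orth_absorber_exists:
  assumes reg: "von_neumann_regular R"
    and e: "e \<in> carrier R" and ee: "e \<otimes> e = e" and b: "b \<in> carrier R"
  shows "\<exists>g. orth_absorber R e b g"
proof -
  define c where "c = (\<one> \<ominus> e) \<otimes> b"
  have c: "c \<in> carrier R" unfolding c_def using e b by simp
  obtain y where y: "y \<in> carrier R" and cyc: "c \<otimes> y \<otimes> c = c" using regularE[OF reg c] .
  have ee2: "e \<otimes> (e \<otimes> z) = e \<otimes> z" if "z \<in> carrier R" for z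
    using that e ee by (simp add: m_assoc[symmetric])
  have ec: "e \<otimes> c = \<zero>" unfolding c_def using e b ee ee2 by (simp add: ring_simprules)
  have ec2: "e \<otimes> (c \<otimes> z) = \<zero>" if "z \<in> carrier R" for z
    using that e c ec by (simp add: m_assoc[symmetric])
  have cyc2: "c \<otimes> (y \<otimes> (c \<otimes> z)) = c \<otimes> z" if "z \<in> carrier R" for z
    using that y c cyc by (simp add: m_assoc[symmetric])
  define g where "g = c \<otimes> y \<otimes> (\<one> \<ominus> e)"
  have g: "g \<in> carrier R" unfolding g_def using c y e by simp
  have gg: "g \<otimes> g = g"
    unfolding g_def using c y e ee ee2 ec ec2 cyc cyc2 by (simp add: ring_simprules)
  have eg: "e \<otimes> g = \<zero>" and ge: "g \<otimes> e = \<zero>"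
    unfolding g_def using c y e ee ee2 ec ec2 by (simp_all add: ring_simprules)
  have gc: "g \<otimes> c = c"
    unfolding g_def using c y e ee ee2 ec ec2 cyc cyc2 by (simp add: ring_simprules)
  have gb: "g \<otimes> b = c"
  proof -
    have "g \<otimes> e \<otimes> b = \<zero>" using ge b by simp
    then have "g \<otimes> c = g \<otimes> b" unfolding c_def using g e b by (simp add: ring_simprules)
    then show ?thesis using gc by simp
  qed
  have absorb: "(e \<oplus> g) \<otimes> b = b"
    using gb g e b unfolding c_def by (simp add: ring_simprules)
  have "g = b \<otimes> (y \<otimes> (\<one> \<ominus> e)) \<oplus> e \<otimes> (\<ominus> (b \<otimes> (y \<otimes> (\<one> \<ominus> e))))"
    unfolding g_def c_def using b y e by (simp add: ring_simprules)
  then have "right_ideal J R \<Longrightarrow> e \<in> J \<Longrightarrow> b \<in> J \<Longrightarrow> g \<in> J" for J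
    using b y e by (metis right_ideal_add right_ideal_mult a_inv_closed m_closed minus_closed one_closed)
  then have "orth_absorber R e b g"
    unfolding orth_absorber_def using g gg eg ge absorb gc c_def by blast
  then show ?thesis ..
qed

lemma absorber:
  "von_neumann_regular R \<Longrightarrow> e \<in> carrier R \<Longrightarrow> e \<otimes> e = e \<Longrightarrow> b \<in> carrier R \<Longrightarrow>
    orth_absorber R e b (absorber R e b)"
  unfolding absorber_def by (rule someI_ex) (rule orth_absorber_exists)

lemma idempotent_orth_sum:
  assumes "e \<in> carrier R" "g \<in> carrier R" "e \<otimes> e = e" "g \<otimes> g = g" "e \<otimes> g = \<zero>" "g \<otimes> e = \<zero>"
  shows "(e \<oplus> g) \<otimes> (e \<oplus> g) = e \<oplus> g"
  using assms by (simp add: l_distr r_distr)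

end

definition absorbing_chain :: "('a, 'c) ring_scheme \<Rightarrow> (nat \<Rightarrow> 'a \<Rightarrow> 'a) \<Rightarrow> nat \<Rightarrow> 'a" where
  "absorbing_chain R b = rec_nat \<zero>\<^bsub>R\<^esub> (\<lambda>n e. e \<oplus>\<^bsub>R\<^esub> absorber R e (b n e))"

context ring begin

lemma absorbing_chain:
  assumes reg: "von_neumann_regular R" and J: "right_ideal J R"
    and bJ: "\<And>n. \<forall>x\<in>J. x \<otimes> x = x \<longrightarrow> b n x \<in> J"
    and e_def: "e = absorbing_chain R b" and g_def: "\<And>n. g n = absorber R (e n) (b n (e n))"
  shows "e n \<in> J" "orth_absorber R (e n) (b n (e n)) (g n)"
    "e n \<in> carrier R \<and> e n \<otimes> e n = e n \<and> g n \<in> carrier R \<and> g n \<otimes> g n = g n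
      \<and> e n \<otimes> g n = \<zero> \<and> g n \<otimes> e n = \<zero> \<and> e (Suc n) = e n \<oplus> g n"
proof -
  have step: "e (Suc n) = e n \<oplus> g n" for n
    unfolding e_def g_def absorbing_chain_def by simp
  have absorbs: "orth_absorber R (e n) (b n (e n)) (g n)" if "e n \<in> J" "e n \<otimes> e n = e n" for n
    unfolding g_def using absorber[OF reg] that bJ that right_ideal_subset[OF J] by blast
  have inv: "e n \<in> J \<and> e n \<otimes> e n = e n" for n
  proof (induction n)
    case 0
    have "e 0 = \<zero>" unfolding e_def absorbing_chain_def by simp
    then show ?case using right_ideal_zero[OF J] by simp
  next
    case (Suc n)
    then have en: "e n \<in> J" "e n \<otimes> e n = e n" "e n \<in> carrier R"
      using right_ideal_subset[OF J] by auto
    then have "g n \<in> carrier R" "g n \<otimes> g n = g n" "e n \<otimes> g n = \<zero>" "g n \<otimes> e n = \<zero>" "g n \<in> J"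
      using absorbs[OF en(1,2)] bJ en J unfolding orth_absorber_def by auto
    then show ?case
      unfolding step using en right_ideal_add[OF J] idempotent_orth_sum by simp
  qed
  show "e n \<in> J" using inv by auto
  show absorber: "orth_absorber R (e n) (b n (e n)) (g n)" using absorbs inv by blast
  show "e n \<in> carrier R \<and> e n \<otimes> e n = e n \<and> g n \<in> carrier R \<and> g n \<otimes> g n = g n
      \<and> e n \<otimes> g n = \<zero> \<and> g n \<otimes> e n = \<zero> \<and> e (Suc n) = e n \<oplus> g n"
    using inv[of n] absorber step right_ideal_subset[OF J] unfolding orth_absorber_def by blast
qed

lemma increasing_idempotents:
  assumes h: "\<And>n. e n \<in> carrier R \<and> e n \<otimes> e n = e n \<and> g n \<in> carrier R \<and> g n \<otimes> g n = g n
      \<and> e n \<otimes> g n = \<zero> \<and> g n \<otimes> e n = \<zero> \<and> e (Suc n) = e n \<oplus> g n"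
  shows increasing_idempotents_le: "m \<le> n \<Longrightarrow> e n \<otimes> e m = e m \<and> e m \<otimes> e n = e m"
    and increasing_idempotents_orth: "k \<noteq> j \<Longrightarrow> g k \<otimes> g j = \<zero>"
proof -
  have c: "e n \<in> carrier R" "g n \<in> carrier R" for n using h by auto
  show le: "e n \<otimes> e m = e m \<and> e m \<otimes> e n = e m" if "m \<le> n" for m n
    using that
  proof (induction n rule: dec_induct)
    case base then show ?case using h[of m] by simp
  next
    case (step n)
    have gm: "g n \<otimes> e m = \<zero>" "e m \<otimes> g n = \<zero>"
    proof -
      have "g n \<otimes> e m = (g n \<otimes> e n) \<otimes> e m" using step.IH c by (simp add: m_assoc)
      then show "g n \<otimes> e m = \<zero>" using h[of n] c by simp
      have "e m \<otimes> g n = e m \<otimes> (e n \<otimes> g n)" using step.IH c by (simp add: m_assoc[symmetric])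
      then show "e m \<otimes> g n = \<zero>" using h[of n] c by simp
    qed
    show ?case using h[of n] c gm step.IH by (simp add: l_distr r_distr)
  qed
  have eg: "e (Suc k) \<otimes> g k = g k" "g k \<otimes> e (Suc k) = g k" for k
    using h[of k] by (simp_all add: l_distr r_distr)
  have orth: "g k \<otimes> g j = \<zero> \<and> g j \<otimes> g k = \<zero>" if "k < j" for k j
  proof -
    have L: "e j \<otimes> e (Suc k) = e (Suc k)" "e (Suc k) \<otimes> e j = e (Suc k)"
      using le[of "Suc k" j] that by auto
    have "g k \<otimes> g j = g k \<otimes> (e (Suc k) \<otimes> (e j \<otimes> g j))"
      using eg L c by (metis m_assoc)
    moreover have "g j \<otimes> g k = ((g j \<otimes> e j) \<otimes> e (Suc k)) \<otimes> g k"
      using eg L c by (metis m_assoc)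
    ultimately show ?thesis using h[of j] c by simp
  qed
  show "g k \<otimes> g j = \<zero>" if "k \<noteq> j" for k j
    using that orth by (cases "k < j") (auto simp: not_less_iff_gr_or_eq)
qed

end

context ring begin

lemma countably_generated_idempotent_chain:
  assumes reg: "von_neumann_regular R" and cg: "countably_generated_right_ideal I R"
  obtains e :: "nat \<Rightarrow> 'a" where "\<And>n. e n \<in> I" "\<And>n. e n \<otimes> e n = e n"
    "\<And>m n. m \<le> n \<Longrightarrow> e n \<otimes> e m = e m \<and> e m \<otimes> e n = e m"
    "\<And>x. x \<in> I \<Longrightarrow> \<exists>m. \<forall>n\<ge>m. e n \<otimes> x = x"
proof -
  obtain S where S: "countable S" "S \<subseteq> carrier R" and IS: "I = right_ideal_gen R S"
    using cg unfolding countably_generated_right_ideal_def by blast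
  have I: "right_ideal I R" using cg unfolding countably_generated_right_ideal_def by blast
  have SI: "S \<subseteq> I" using right_ideal_gen_incl IS by blast
  define s where "s n = (if S = {} then \<zero> else from_nat_into S n)" for n
  have s: "s n \<in> I" for n
    unfolding s_def using from_nat_into[of S n] SI right_ideal_zero[OF I] by auto
  have S_range: "S \<subseteq> range s"
    unfolding s_def using from_nat_into_surj[OF S(1)] by (auto simp: image_iff)
  define e where "e = absorbing_chain R (\<lambda>n _. s n)"
  have sI: "\<forall>x\<in>I. x \<otimes> x = x \<longrightarrow> s n \<in> I" for n using s by blast
  define g where "g n = absorber R (e n) (s n)" for n
  note chain = absorbing_chain[where b = "\<lambda>n _. s n", OF reg I sI e_def g_def]
  have c: "e n \<in> carrier R" for n using chain(3) by blast
  have le: "m \<le> n \<Longrightarrow> e n \<otimes> e m = e m \<and> e m \<otimes> e n = e m" for m n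
    using increasing_idempotents_le[of e g, OF chain(3)] .
  have absorbs: "e (Suc n) \<otimes> s n = s n" for n
    using chain(2)[of n] chain(3)[of n] unfolding orth_absorber_def by auto
  define T where "T = {x \<in> carrier R. \<exists>m. e m \<otimes> x = x}"
  have fixed_later: "e n \<otimes> x = x" if x: "e m \<otimes> x = x" "x \<in> carrier R" and "m \<le> n" for m n x
  proof -
    have "e n \<otimes> x = (e n \<otimes> e m) \<otimes> x" using x c by (simp add: m_assoc)
    then show ?thesis using le[OF \<open>m \<le> n\<close>] x by simp
  qed
  have T: "right_ideal T R"
  proof (rule right_idealI)
    show "\<zero> \<in> T" unfolding T_def using c by auto
  next
    fix x y assume "x \<in> T" "y \<in> T"
    then obtain a b where x: "e a \<otimes> x = x" "x \<in> carrier R" and y: "e b \<otimes> y = y" "y \<in> carrier R"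
      unfolding T_def by blast
    then have "e (max a b) \<otimes> (x \<oplus> y) = x \<oplus> y"
      using fixed_later[OF x] fixed_later[OF y] c by (simp add: r_distr)
    then show "x \<oplus> y \<in> T" unfolding T_def using x y by blast
  next
    fix x assume "x \<in> T"
    then obtain a where x: "x \<in> carrier R" "e a \<otimes> x = x" unfolding T_def by blast
    then have "e a \<otimes> (\<ominus> x) = \<ominus> x" using c by (simp add: r_minus)
    then show "\<ominus> x \<in> T" unfolding T_def using x by blast
  next
    fix x r assume "x \<in> T" "r \<in> carrier R"
    then obtain a where x: "x \<in> carrier R" "e a \<otimes> x = x" and r: "r \<in> carrier R"
      unfolding T_def by blast
    then have "e a \<otimes> (x \<otimes> r) = x \<otimes> r" using c by (simp add: m_assoc[symmetric])
    then show "x \<otimes> r \<in> T" unfolding T_def using x r by blast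
  qed (auto simp: T_def)
  have "s n \<in> T" for n using absorbs s right_ideal_subset[OF I] unfolding T_def by blast
  then have "S \<subseteq> T" using S_range by blast
  then have "I \<subseteq> T" using right_ideal_gen_min[OF T] IS by simp
  show thesis
  proof (rule that)
    show "e n \<in> I" "e n \<otimes> e n = e n" for n using chain(1,3) by auto
    show "\<And>m n. m \<le> n \<Longrightarrow> e n \<otimes> e m = e m \<and> e m \<otimes> e n = e m" by (rule le)
    show "\<exists>m. \<forall>n\<ge>m. e n \<otimes> x = x" if "x \<in> I" for x
      using that \<open>I \<subseteq> T\<close> fixed_later unfolding T_def by blast
  qed
qed

end

context ring begin

text \<open>In a regular ring an R-homomorphism from a right ideal into N kills every element
  annihilating N: z = z (w z) with w z \<in> Ann N.\<close>

lemma rhom_vanishes_on_Ann: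
  assumes reg: "von_neumann_regular R" and N: "right_module R N"
    and I: "right_ideal I R" and f: "rhom_on R I N f"
    and z: "z \<in> I" "z \<in> Ann R N"
  shows "f z = \<zero>\<^bsub>N\<^esub>"
proof -
  have zc: "z \<in> carrier R" using z right_ideal_subset[OF I] by auto
  obtain w where w: "w \<in> carrier R" "z \<otimes> w \<otimes> z = z" using regularE[OF reg zc] .
  have wz: "w \<otimes> z \<in> Ann R N" using ideal.I_l_closed[OF Ann_ideal[OF N] z(2) w(1)] .
  have "f z = f (z \<otimes> (w \<otimes> z))" using w zc by (simp add: m_assoc)
  also have "\<dots> = rsmult N (f z) (w \<otimes> z)" using f z(1) w zc unfolding rhom_on_def by simp
  also have "\<dots> = \<zero>\<^bsub>N\<^esub>" using AnnD[OF wz] f z(1) unfolding rhom_on_def by blast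
  finally show ?thesis .
qed

lemma rhom_extension_by_left_factor:
  assumes reg: "von_neumann_regular R" and N: "right_module R N"
    and I: "right_ideal I R" and f: "rhom_on R I N f"
    and \<epsilon>: "\<epsilon> \<in> I" and Ann: "\<And>x. x \<in> I \<Longrightarrow> x \<ominus> \<epsilon> \<otimes> x \<in> Ann R N"
  shows "rhom_on R (carrier R) N (\<lambda>x. f (\<epsilon> \<otimes> x))" "\<And>x. x \<in> I \<Longrightarrow> f (\<epsilon> \<otimes> x) = f x"
proof -
  interpret N: abelian_group N using right_module_abelian_group[OF N] .
  have \<epsilon>c: "\<epsilon> \<in> carrier R" using \<epsilon> right_ideal_subset[OF I] by blast
  have \<epsilon>I: "\<epsilon> \<otimes> x \<in> I" if "x \<in> carrier R" for x using right_ideal_mult[OF I \<epsilon> that] .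
  show "rhom_on R (carrier R) N (\<lambda>x. f (\<epsilon> \<otimes> x))"
    unfolding rhom_on_def
  proof (intro conjI ballI)
    fix x y r assume x: "x \<in> carrier R" and y: "y \<in> carrier R" and r: "r \<in> carrier R"
    show "f (\<epsilon> \<otimes> x) \<in> carrier N" using f \<epsilon>I[OF x] unfolding rhom_on_def by blast
    have "\<epsilon> \<otimes> (x \<oplus> y) = \<epsilon> \<otimes> x \<oplus> \<epsilon> \<otimes> y" using x y \<epsilon>c by (simp add: r_distr)
    then show "f (\<epsilon> \<otimes> (x \<oplus> y)) = f (\<epsilon> \<otimes> x) \<oplus>\<^bsub>N\<^esub> f (\<epsilon> \<otimes> y)"
      using f \<epsilon>I[OF x] \<epsilon>I[OF y] unfolding rhom_on_def by simp
    have "\<epsilon> \<otimes> (x \<otimes> r) = (\<epsilon> \<otimes> x) \<otimes> r" using x r \<epsilon>c by (simp add: m_assoc)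
    then show "f (\<epsilon> \<otimes> (x \<otimes> r)) = rsmult N (f (\<epsilon> \<otimes> x)) r"
      using f \<epsilon>I[OF x] r unfolding rhom_on_def by simp
  qed
  fix x assume x: "x \<in> I"
  have xc: "x \<in> carrier R" using x right_ideal_subset[OF I] by blast
  define z where "z = x \<ominus> \<epsilon> \<otimes> x"
  have zI: "z \<in> I" unfolding z_def using right_ideal_minus[OF I x \<epsilon>I[OF xc]] .
  have split: "\<epsilon> \<otimes> x \<oplus> z = x" unfolding z_def using \<epsilon>c xc by (simp add: ring_simprules)
  have "f (\<epsilon> \<otimes> x \<oplus> z) = f (\<epsilon> \<otimes> x) \<oplus>\<^bsub>N\<^esub> f z"
    using f \<epsilon>I[OF xc] zI unfolding rhom_on_def by blast
  then have "f x = f (\<epsilon> \<otimes> x) \<oplus>\<^bsub>N\<^esub> f z" by (simp only: split)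
  also have "f z = \<zero>\<^bsub>N\<^esub>" using rhom_vanishes_on_Ann[OF reg N I f zI Ann[OF x, folded z_def]] .
  finally show "f (\<epsilon> \<otimes> x) = f x" using f \<epsilon>I[OF xc] unfolding rhom_on_def by simp
qed

text \<open>Under DCC on right ideals above an ideal A, an increasing chain of idempotents
  becomes constant modulo A: the right ideals {x. e n x \<in> A} decrease.\<close>

lemma increasing_idempotents_stabilize:
  fixes e :: "nat \<Rightarrow> 'a"
  assumes A: "ideal A R" and dcc: "dcc_above R A"
    and e: "\<And>n. e n \<in> carrier R" "\<And>n. e n \<otimes> e n = e n"
    and le: "\<And>m n. m \<le> n \<Longrightarrow> e n \<otimes> e m = e m \<and> e m \<otimes> e n = e m"
  obtains N where "\<And>m. m \<ge> N \<Longrightarrow> e m \<ominus> e N \<in> A"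
proof -
  define K where "K n = {x \<in> carrier R. e n \<otimes> x \<in> A}" for n
  have K: "right_ideal (K n) R \<and> A \<subseteq> K n" for n
  proof
    show "right_ideal (K n) R"
    proof (rule right_idealI)
      show "\<zero> \<in> K n" unfolding K_def using e additive_subgroup.zero_closed[OF ideal.axioms(1)[OF A]]
        by simp
    next
      fix x y assume "x \<in> K n" "y \<in> K n"
      then show "x \<oplus> y \<in> K n" unfolding K_def
        using e additive_subgroup.a_closed[OF ideal.axioms(1)[OF A]] by (simp add: r_distr)
    next
      fix x assume "x \<in> K n"
      then show "\<ominus> x \<in> K n" unfolding K_def
        using e additive_subgroup.a_inv_closed[OF ideal.axioms(1)[OF A]] by (simp add: r_minus)
    next
      fix x r assume "x \<in> K n" "r \<in> carrier R"
      then show "x \<otimes> r \<in> K n" unfolding K_def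
        using e ideal.I_r_closed[OF A] by (simp add: m_assoc[symmetric])
    qed (auto simp: K_def)
    show "A \<subseteq> K n" unfolding K_def using e ideal.I_l_closed[OF A] ideal.Icarr[OF A] by blast
  qed
  have "K (Suc n) \<subseteq> K n" for n
  proof
    fix x assume "x \<in> K (Suc n)"
    then have x: "x \<in> carrier R" "e (Suc n) \<otimes> x \<in> A" unfolding K_def by auto
    have "e n \<otimes> x = e n \<otimes> (e (Suc n) \<otimes> x)"
      using le[of n "Suc n"] e x by (simp add: m_assoc[symmetric])
    also have "\<dots> \<in> A" using ideal.I_l_closed[OF A x(2) e(1)] .
    finally show "x \<in> K n" unfolding K_def using x by simp
  qed
  then obtain N where N: "\<forall>m\<ge>N. K m = K N" using dcc K unfolding dcc_above_def by blast
  have "e m \<ominus> e N \<in> A" if "m \<ge> N" for m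
  proof -
    have "e N \<otimes> (\<one> \<ominus> e N) = \<zero>" using e by (simp add: ring_simprules)
    then have "\<one> \<ominus> e N \<in> K N"
      unfolding K_def using e additive_subgroup.zero_closed[OF ideal.axioms(1)[OF A]] by simp
    moreover have "K m = K N" using N that by blast
    ultimately have "\<one> \<ominus> e N \<in> K m" by simp
    then have "e m \<otimes> (\<one> \<ominus> e N) \<in> A" unfolding K_def by simp
    moreover have "e m \<otimes> (\<one> \<ominus> e N) = e m \<ominus> e N" using le[OF that] e by (simp add: ring_simprules)
    ultimately show ?thesis by simp
  qed
  then show thesis using that by blast
qed

lemma dcc_imp_aleph0_injective:
  assumes reg: "von_neumann_regular R" and N: "right_module R N"
    and dcc: "dcc_above R (Ann R N)"
  shows "aleph0_injective R N"
  unfolding aleph0_injective_def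
proof (intro allI impI, elim conjE)
  fix I f assume cg: "countably_generated_right_ideal I R" and f: "rhom_on R I N f"
  have I: "right_ideal I R" using cg unfolding countably_generated_right_ideal_def by blast
  obtain e :: "nat \<Rightarrow> 'a" where eI: "\<And>n. e n \<in> I" and idem: "\<And>n. e n \<otimes> e n = e n"
    and le: "\<And>m n. m \<le> n \<Longrightarrow> e n \<otimes> e m = e m \<and> e m \<otimes> e n = e m"
    and fixed: "\<And>x. x \<in> I \<Longrightarrow> \<exists>m. \<forall>n\<ge>m. e n \<otimes> x = x"
    using countably_generated_idempotent_chain[OF reg cg] by blast
  have ec: "e n \<in> carrier R" for n using eI right_ideal_subset[OF I] by blast
  obtain K where K: "\<And>m. m \<ge> K \<Longrightarrow> e m \<ominus> e K \<in> Ann R N"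
    using increasing_idempotents_stabilize[of "Ann R N" e, OF Ann_ideal[OF N] dcc ec idem le] by blast
  have "x \<ominus> e K \<otimes> x \<in> Ann R N" if x: "x \<in> I" for x
  proof -
    obtain m where "\<forall>n\<ge>m. e n \<otimes> x = x" using fixed[OF x] by blast
    then have m: "e (max m K) \<otimes> x = x" by simp
    have xc: "x \<in> carrier R" using x right_ideal_subset[OF I] by blast
    have "(e (max m K) \<ominus> e K) \<otimes> x = e (max m K) \<otimes> x \<ominus> e K \<otimes> x"
      using ec xc by (simp add: a_minus_def l_distr l_minus)
    then have "x \<ominus> e K \<otimes> x = (e (max m K) \<ominus> e K) \<otimes> x" using m by simp
    then show ?thesis using ideal.I_r_closed[OF Ann_ideal[OF N] K[of "max m K"] xc] by simp
  qed
  note extension = rhom_extension_by_left_factor[OF reg N I f eI[of K] this]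
  show "\<exists>g. rhom_on R (carrier R) N g \<and> (\<forall>x\<in>I. g x = f x)"
    using extension by blast
qed

end

context ring begin

lemma finite_support_right_ideal:
  assumes M: "right_module R M" and u: "\<And>k. u k \<in> carrier M"
  shows "right_ideal {x \<in> carrier R. finite {k. rsmult M (u k) x \<noteq> \<zero>\<^bsub>M\<^esub>}} R"
    (is "right_ideal ?T R")
proof -
  interpret M: abelian_group M using right_module_abelian_group[OF M] .
  let ?supp = "\<lambda>x. {k. rsmult M (u k) x \<noteq> \<zero>\<^bsub>M\<^esub>}"
  show ?thesis
  proof (rule right_idealI)
    show "\<zero> \<in> ?T" using rsmult_zero_scalar[OF M u] by simp
  next
    fix x y assume x: "x \<in> ?T" and y: "y \<in> ?T"
    then have "?supp (x \<oplus> y) \<subseteq> ?supp x \<union> ?supp y"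
      using rsmult_add_scalar[OF M u] by auto
    then show "x \<oplus> y \<in> ?T" using x y finite_subset by auto
  next
    fix x assume x: "x \<in> ?T"
    then have "?supp (\<ominus> x) \<subseteq> ?supp x"
      using rsmult_neg_scalar[OF M u] rsmult_closed[OF M u] by auto
    then show "\<ominus> x \<in> ?T" using x finite_subset by auto
  next
    fix x r assume x: "x \<in> ?T" and r: "r \<in> carrier R"
    then have "?supp (x \<otimes> r) \<subseteq> ?supp x"
      using rsmult_assoc[OF M u, symmetric] rsmult_zero_vector[OF M r] by auto
    then show "x \<otimes> r \<in> ?T" using x r finite_subset by auto
  qed auto
qed

lemma coordinate_rhom:
  fixes \<iota> :: "nat \<Rightarrow> 'i"
  assumes M: "right_module R M" and \<iota>: "inj \<iota>" and u: "\<And>k. u k \<in> carrier M"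
    and I: "right_ideal I R" and fin: "\<And>x. x \<in> I \<Longrightarrow> finite {k. rsmult M (u k) x \<noteq> \<zero>\<^bsub>M\<^esub>}"
  shows "rhom_on R I (dsum M (range \<iota>)) (\<lambda>x. \<lambda>i\<in>range \<iota>. rsmult M (u (inv_into UNIV \<iota> i)) x)"
    (is "rhom_on R I ?D ?F")
  unfolding rhom_on_def
proof (intro conjI ballI)
  have xc: "x \<in> carrier R" if "x \<in> I" for x using that right_ideal_subset[OF I] by blast
  fix x assume x: "x \<in> I"
  have "{i \<in> range \<iota>. ?F x i \<noteq> \<zero>\<^bsub>M\<^esub>} \<subseteq> \<iota> ` {k. rsmult M (u k) x \<noteq> \<zero>\<^bsub>M\<^esub>}"
    using \<iota> by auto
  then have "finite {i \<in> range \<iota>. ?F x i \<noteq> \<zero>\<^bsub>M\<^esub>}" using fin[OF x] finite_subset by blast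
  then show "?F x \<in> carrier ?D" using rsmult_closed[OF M u xc[OF x]] by (simp add: dsum_carrier)
  fix y assume y: "y \<in> I"
  show "?F (x \<oplus> y) = ?F x \<oplus>\<^bsub>?D\<^esub> ?F y"
    unfolding dsum_add by (rule restrict_ext) (simp add: rsmult_add_scalar[OF M u] xc x y)
next
  fix x r assume x: "x \<in> I" and r: "r \<in> carrier R"
  have xc: "x \<in> carrier R" using x right_ideal_subset[OF I] by blast
  show "?F (x \<otimes> r) = rsmult ?D (?F x) r"
    unfolding dsum_rsmult by (rule restrict_ext) (simp add: rsmult_assoc[OF M u] xc r)
qed

lemma rhom_on_carrier_eq:
  assumes "rhom_on R (carrier R) N G" "x \<in> carrier R"
  shows "G x = rsmult N (G \<one>) x"
proof -
  have "G (\<one> \<otimes> x) = rsmult N (G \<one>) x" using assms unfolding rhom_on_def by blast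
  then show ?thesis using assms(2) by simp
qed

end

definition orthogonal_idempotents :: "('a, 'c) ring_scheme \<Rightarrow> (nat \<Rightarrow> 'a) \<Rightarrow> bool" where
  "orthogonal_idempotents R g \<longleftrightarrow> (\<forall>k. g k \<in> carrier R \<and> g k \<otimes>\<^bsub>R\<^esub> g k = g k)
     \<and> (\<forall>k j. k \<noteq> j \<longrightarrow> g k \<otimes>\<^bsub>R\<^esub> g j = \<zero>\<^bsub>R\<^esub>)"

context ring begin

text \<open>A sequence of orthogonal idempotents none of which annihilates M gives a countably
  generated right ideal together with a homomorphism into a countable direct sum of copies
  of M that does not extend to R, since a homomorphism on R has finitely supported value at 1.\<close>

lemma orthogonal_idempotents_obstruct:
  fixes g :: "nat \<Rightarrow> 'a" and \<iota> :: "nat \<Rightarrow> 'i"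
  assumes M: "right_module R M" and \<iota>: "inj \<iota>"
    and og: "orthogonal_idempotents R g" and notAnn: "\<And>k. g k \<notin> Ann R M"
  shows "\<not> aleph0_injective R (dsum M (range \<iota>))"
proof
  assume inj: "aleph0_injective R (dsum M (range \<iota>))"
  have g: "\<And>k. g k \<in> carrier R" "\<And>k. g k \<otimes> g k = g k"
    and orth: "\<And>k j. k \<noteq> j \<Longrightarrow> g k \<otimes> g j = \<zero>"
    using og unfolding orthogonal_idempotents_def by auto
  interpret M: abelian_group M using right_module_abelian_group[OF M] .
  have "\<exists>m\<in>carrier M. rsmult M m (g k) \<noteq> \<zero>\<^bsub>M\<^esub>" for k
  proof (rule ccontr)
    assume "\<not> (\<exists>m\<in>carrier M. rsmult M m (g k) \<noteq> \<zero>\<^bsub>M\<^esub>)"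
    then have "g k \<in> Ann R M" using g(1) by (auto intro!: AnnI)
    then show False using notAnn by blast
  qed
  then obtain m where m: "\<And>k. m k \<in> carrier M" "\<And>k. rsmult M (m k) (g k) \<noteq> \<zero>\<^bsub>M\<^esub>"
    by metis
  define u where "u k = rsmult M (m k) (g k)" for k
  have u: "u k \<in> carrier M" for k unfolding u_def using rsmult_closed[OF M m(1) g(1)] .
  have u_self: "rsmult M (u k) (g k) = u k" for k
    unfolding u_def using rsmult_assoc[OF M m(1) g(1) g(1)] g(2) by simp
  have u_other: "rsmult M (u k) (g j) = \<zero>\<^bsub>M\<^esub>" if "j \<noteq> k" for j k
    unfolding u_def using rsmult_assoc[OF M m(1) g(1) g(1)] orth that rsmult_zero_scalar[OF M m(1)]
    by simp
  define T where "T = {x \<in> carrier R. finite {k. rsmult M (u k) x \<noteq> \<zero>\<^bsub>M\<^esub>}}"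
  have T: "right_ideal T R" unfolding T_def by (rule finite_support_right_ideal[OF M u])
  have "g j \<in> T" for j
  proof -
    have "{k. rsmult M (u k) (g j) \<noteq> \<zero>\<^bsub>M\<^esub>} \<subseteq> {j}" using u_other[of j] by force
    then show ?thesis unfolding T_def using g(1) finite_subset by auto
  qed
  then have "range g \<subseteq> T" by blast
  define I where "I = right_ideal_gen R (range g)"
  have rg: "range g \<subseteq> carrier R" using g(1) by blast
  have I: "right_ideal I R" unfolding I_def by (rule right_ideal_gen_right_ideal[OF rg])
  have "I \<subseteq> T" unfolding I_def by (rule right_ideal_gen_min[OF T \<open>range g \<subseteq> T\<close>])
  have "countable (range g)" by simp
  then have cg: "countably_generated_right_ideal I R"
    unfolding countably_generated_right_ideal_def using I rg I_def by blast
  define F where "F x = (\<lambda>i\<in>range \<iota>. rsmult M (u (inv_into UNIV \<iota> i)) x)" for x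
  have F: "rhom_on R I (dsum M (range \<iota>)) F"
    unfolding F_def using \<open>I \<subseteq> T\<close> by (intro coordinate_rhom[OF M \<iota> u I]) (auto simp: T_def)
  obtain G where G: "rhom_on R (carrier R) (dsum M (range \<iota>)) G" and GF: "\<forall>x\<in>I. G x = F x"
    using inj cg F unfolding aleph0_injective_def by blast
  define y where "y = G \<one>"
  have "y \<in> carrier (dsum M (range \<iota>))" unfolding y_def using G unfolding rhom_on_def by simp
  then have "finite {i \<in> range \<iota>. y i \<noteq> \<zero>\<^bsub>M\<^esub>}" by (simp add: dsum_carrier)
  then have "finite (\<iota> -` {i \<in> range \<iota>. y i \<noteq> \<zero>\<^bsub>M\<^esub>})" using \<iota> by (rule finite_vimageI)
  then obtain k where "k \<notin> \<iota> -` {i \<in> range \<iota>. y i \<noteq> \<zero>\<^bsub>M\<^esub>}"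
    using ex_new_if_finite[OF infinite_UNIV_nat] by blast
  then have k: "y (\<iota> k) = \<zero>\<^bsub>M\<^esub>" by simp
  have "G (g k) (\<iota> k) = rsmult M (y (\<iota> k)) (g k)"
    using rhom_on_carrier_eq[OF G g(1)] unfolding y_def by (simp add: dsum_rsmult)
  also have "\<dots> = \<zero>\<^bsub>M\<^esub>" using k rsmult_zero_vector[OF M g(1)] by simp
  finally have zero: "G (g k) (\<iota> k) = \<zero>\<^bsub>M\<^esub>" .
  have "g k \<in> I" unfolding I_def using right_ideal_gen_incl[of "range g"] by blast
  then have "G (g k) (\<iota> k) = F (g k) (\<iota> k)" using GF by simp
  also have "\<dots> = u k" unfolding F_def using u_self \<iota> by (simp add: inv_into_f_f)
  finally have "G (g k) (\<iota> k) = u k" .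
  then show False using zero m(2)[of k] unfolding u_def by simp
qed

lemma orthogonal_idempotents_not_sigma:
  fixes g :: "nat \<Rightarrow> 'a"
  assumes M: "right_module R M" and inf: "infinite (UNIV :: 'i set)"
    and og: "orthogonal_idempotents R g" and infA: "infinite {k. g k \<notin> Ann R M}"
  shows "\<not> sigma_aleph0_injective TYPE('i) R M"
proof -
  obtain \<sigma> :: "nat \<Rightarrow> nat" where \<sigma>: "inj \<sigma>" "range \<sigma> \<subseteq> {k. g k \<notin> Ann R M}"
    using infinite_countable_subset[OF infA] by blast
  obtain \<iota> :: "nat \<Rightarrow> 'i" where \<iota>: "inj \<iota>"
    using infinite_countable_subset[OF inf] by blast
  have "orthogonal_idempotents R (g \<circ> \<sigma>)"
    using og \<sigma>(1) unfolding orthogonal_idempotents_def by (auto dest: injD)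
  moreover have "\<And>k. (g \<circ> \<sigma>) k \<notin> Ann R M" using \<sigma>(2) by auto
  ultimately have "\<not> aleph0_injective R (dsum M (range \<iota>))"
    by (rule orthogonal_idempotents_obstruct[OF M \<iota>])
  then show ?thesis unfolding sigma_aleph0_injective_def by blast
qed

end

definition principal_plus :: "('a, 'c) ring_scheme \<Rightarrow> 'a \<Rightarrow> 'a set \<Rightarrow> 'a set" where
  "principal_plus R e A = {e \<otimes>\<^bsub>R\<^esub> r \<oplus>\<^bsub>R\<^esub> a | r a. r \<in> carrier R \<and> a \<in> A}"

context ring begin

text \<open>Absorbing, one by one, elements of J outside eR + A
  produces orthogonal idempotents outside A.\<close>

lemma orthogonal_idempotents_of_nonsplit_ideal:
  assumes reg: "von_neumann_regular R" and A: "ideal A R" and J: "right_ideal J R"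
    and nonsplit: "\<forall>e\<in>J. e \<otimes> e = e \<longrightarrow> \<not> J \<subseteq> principal_plus R e A"
  obtains g where "orthogonal_idempotents R g" "\<And>k. g k \<notin> A"
proof -
  define pick where "pick e = (SOME x. x \<in> J \<and> x \<notin> principal_plus R e A)" for e
  have pick: "pick e \<in> J \<and> pick e \<notin> principal_plus R e A" if "e \<in> J" "e \<otimes> e = e" for e
  proof -
    have "\<exists>x. x \<in> J \<and> x \<notin> principal_plus R e A" using nonsplit that by blast
    then show ?thesis unfolding pick_def by (rule someI_ex)
  qed
  have pickJ: "\<forall>x\<in>J. x \<otimes> x = x \<longrightarrow> pick x \<in> J" using pick by blast
  define e where "e = absorbing_chain R (\<lambda>_. pick)"
  define g where "g n = absorber R (e n) (pick (e n))" for n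
  note chain = absorbing_chain[where b = "\<lambda>_. pick", OF reg J pickJ e_def g_def]
  have "orthogonal_idempotents R g"
    unfolding orthogonal_idempotents_def
    using chain(3) increasing_idempotents_orth[of e g, OF chain(3)] by blast
  moreover have "g n \<notin> A" for n
  proof
    assume gA: "g n \<in> A"
    have en: "e n \<in> carrier R" "e n \<in> J" "e n \<otimes> e n = e n" using chain(1,3) by auto
    define b where "b = pick (e n)"
    have b: "b \<in> J" "b \<notin> principal_plus R (e n) A" unfolding b_def using pick[OF en(2,3)] by auto
    have bc: "b \<in> carrier R" using b(1) right_ideal_subset[OF J] by blast
    have "g n \<otimes> ((\<one> \<ominus> e n) \<otimes> b) = (\<one> \<ominus> e n) \<otimes> b"
      using chain(2)[of n] unfolding orth_absorber_def b_def by blast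
    moreover have "g n \<otimes> ((\<one> \<ominus> e n) \<otimes> b) \<in> A"
      using ideal.I_r_closed[OF A gA] en(1) bc by simp
    ultimately have "(\<one> \<ominus> e n) \<otimes> b \<in> A" by simp
    moreover have "b = e n \<otimes> b \<oplus> (\<one> \<ominus> e n) \<otimes> b" using en(1) bc by (simp add: ring_simprules)
    ultimately have "b \<in> principal_plus R (e n) A" unfolding principal_plus_def using bc by blast
    then show False using b(2) by contradiction
  qed
  ultimately show thesis by (rule that)
qed

text \<open>For a decreasing chain of idempotents the successive differences e n - e (n+1) are
  orthogonal idempotents: apply the increasing case to the complements 1 - e n.\<close>

lemma decreasing_idempotents_orth:
  fixes e :: "nat \<Rightarrow> 'a"
  assumes e: "\<And>n. e n \<in> carrier R" "\<And>n. e n \<otimes> e n = e n"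
    and dec: "\<And>n. e n \<otimes> e (Suc n) = e (Suc n)" "\<And>n. e (Suc n) \<otimes> e n = e (Suc n)"
  shows "orthogonal_idempotents R (\<lambda>n. e n \<ominus> e (Suc n))"
proof -
  define E where "E n = \<one> \<ominus> e n" for n
  define G where "G n = e n \<ominus> e (Suc n)" for n
  have step: "E n \<in> carrier R \<and> E n \<otimes> E n = E n \<and> G n \<in> carrier R \<and> G n \<otimes> G n = G n
      \<and> E n \<otimes> G n = \<zero> \<and> G n \<otimes> E n = \<zero> \<and> E (Suc n) = E n \<oplus> G n" for n
  proof -
    have c: "e n \<in> carrier R" "e (Suc n) \<in> carrier R" using e by auto
    have assoc: "e n \<otimes> (e n \<otimes> z) = e n \<otimes> z" "e (Suc n) \<otimes> (e (Suc n) \<otimes> z) = e (Suc n) \<otimes> z"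
      "e n \<otimes> (e (Suc n) \<otimes> z) = e (Suc n) \<otimes> z" "e (Suc n) \<otimes> (e n \<otimes> z) = e (Suc n) \<otimes> z"
      if "z \<in> carrier R" for z
      using that c e dec by (simp_all add: m_assoc[symmetric])
    show ?thesis unfolding E_def G_def using c e dec assoc by (simp add: ring_simprules)
  qed
  have "G k \<otimes> G j = \<zero>" if "k \<noteq> j" for k j
    using increasing_idempotents_orth[of E G, OF step that] .
  then show ?thesis using step unfolding orthogonal_idempotents_def G_def by blast
qed

lemma refine_idempotent:
  assumes A: "ideal A R" and e: "e \<in> carrier R" "e \<otimes> e = e"
    and J: "right_ideal J R" "A \<subseteq> J" "J \<subseteq> principal_plus R e A"
    and c: "c \<in> J" "c \<in> {e \<otimes> r |r. r \<in> carrier R}" "c \<otimes> c = c"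
    and cP: "J \<inter> {e \<otimes> r |r. r \<in> carrier R} \<subseteq> principal_plus R c A"
  shows "c \<otimes> e \<in> J" "c \<otimes> e \<in> carrier R" "(c \<otimes> e) \<otimes> (c \<otimes> e) = c \<otimes> e"
    "e \<otimes> (c \<otimes> e) = c \<otimes> e" "(c \<otimes> e) \<otimes> e = c \<otimes> e" "J \<subseteq> principal_plus R (c \<otimes> e) A"
proof -
  have Ac: "a \<in> carrier R" if "a \<in> A" for a using ideal.Icarr[OF A that] .
  obtain r0 where r0: "r0 \<in> carrier R" "c = e \<otimes> r0" using c(2) by blast
  have cc: "c \<in> carrier R" using r0 e by simp
  have ec: "e \<otimes> c = c" using r0 e by (simp add: m_assoc[symmetric])
  have ec2: "e \<otimes> (c \<otimes> z) = c \<otimes> z" if "z \<in> carrier R" for z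
    using ec e cc that by (simp add: m_assoc[symmetric])
  have cc2: "c \<otimes> (c \<otimes> z) = c \<otimes> z" if "z \<in> carrier R" for z
    using c(3) cc that by (simp add: m_assoc[symmetric])
  show "c \<otimes> e \<in> J" using right_ideal_mult[OF J(1) c(1) e(1)] .
  show "c \<otimes> e \<in> carrier R" using cc e by simp
  show "(c \<otimes> e) \<otimes> (c \<otimes> e) = c \<otimes> e" using e cc ec2 cc2 by (simp add: m_assoc)
  show "e \<otimes> (c \<otimes> e) = c \<otimes> e" using ec2 e by simp
  show "(c \<otimes> e) \<otimes> e = c \<otimes> e" using e cc by (simp add: m_assoc)
  show "J \<subseteq> principal_plus R (c \<otimes> e) A"
  proof
    fix x assume x: "x \<in> J"
    then obtain r a where ra: "r \<in> carrier R" "a \<in> A" "x = e \<otimes> r \<oplus> a"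
      using J(3) unfolding principal_plus_def by blast
    have "x \<ominus> a = e \<otimes> r" using ra e Ac[OF ra(2)] by (simp add: ring_simprules)
    moreover have "a \<in> J" using ra(2) J(2) by blast
    then have "x \<ominus> a \<in> J" by (rule right_ideal_minus[OF J(1) x])
    ultimately have "e \<otimes> r \<in> J \<inter> {e \<otimes> r |r. r \<in> carrier R}" using ra(1) by auto
    with cP have "e \<otimes> r \<in> principal_plus R c A" by (rule subsetD)
    then obtain s a' where sa: "s \<in> carrier R" "a' \<in> A" "e \<otimes> r = c \<otimes> s \<oplus> a'"
      unfolding principal_plus_def by blast
    have "(c \<otimes> e) \<otimes> (c \<otimes> s) = c \<otimes> s" using e cc sa(1) ec2 cc2 by (simp add: m_assoc)
    then have "x = (c \<otimes> e) \<otimes> (c \<otimes> s) \<oplus> (a' \<oplus> a)"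
      using ra(3) sa(3) cc sa(1) Ac[OF sa(2)] Ac[OF ra(2)] by (simp add: a_assoc)
    moreover have "a' \<oplus> a \<in> A" using ideal.axioms(1)[OF A] sa(2) ra(2) by (rule additive_subgroup.a_closed)
    ultimately show "x \<in> principal_plus R (c \<otimes> e) A"
      unfolding principal_plus_def using cc sa(1) by blast
  qed
qed

lemma orthogonal_idempotents_of_descending_chain:
  fixes I :: "nat \<Rightarrow> 'a set"
  assumes A: "ideal A R"
    and split: "\<forall>J. right_ideal J R \<longrightarrow> (\<exists>e\<in>J. e \<otimes> e = e \<and> J \<subseteq> principal_plus R e A)"
    and I: "\<And>n. right_ideal (I n) R" "\<And>n. A \<subseteq> I n" and dec: "\<And>n. I (Suc n) \<subseteq> I n"
  obtains g where "orthogonal_idempotents R g" "\<And>n. I n \<noteq> I (Suc n) \<Longrightarrow> g n \<notin> A"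
proof -
  define ch where "ch J = (SOME e. e \<in> J \<and> e \<otimes> e = e \<and> J \<subseteq> principal_plus R e A)" for J
  have ch: "ch J \<in> J \<and> ch J \<otimes> ch J = ch J \<and> J \<subseteq> principal_plus R (ch J) A"
    if "right_ideal J R" for J
  proof -
    have "\<exists>e. e \<in> J \<and> e \<otimes> e = e \<and> J \<subseteq> principal_plus R e A" using split that by blast
    then show ?thesis unfolding ch_def by (rule someI_ex)
  qed
  define P where "P e = {e \<otimes> r |r. r \<in> carrier R}" for e
  define e where "e = rec_nat (ch (I 0)) (\<lambda>n e. ch (I (Suc n) \<inter> P e) \<otimes> e)"
  have e0: "e 0 = ch (I 0)" and eS: "e (Suc n) = ch (I (Suc n) \<inter> P (e n)) \<otimes> e n" for n
    unfolding e_def by simp_all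
  have step: "e (Suc n) \<in> carrier R \<and> e (Suc n) \<otimes> e (Suc n) = e (Suc n) \<and> e (Suc n) \<in> I (Suc n)
      \<and> I (Suc n) \<subseteq> principal_plus R (e (Suc n)) A
      \<and> e n \<otimes> e (Suc n) = e (Suc n) \<and> e (Suc n) \<otimes> e n = e (Suc n)"
    if en: "e n \<in> carrier R" "e n \<otimes> e n = e n" "I n \<subseteq> principal_plus R (e n) A" for n
  proof -
    let ?J = "I (Suc n) \<inter> P (e n)"
    have "right_ideal ?J R"
      unfolding P_def by (rule right_ideal_Int[OF I(1) right_ideal_principal[OF en(1)]])
    note c = ch[OF this]
    have "I (Suc n) \<subseteq> principal_plus R (e n) A" using dec en(3) by blast
    note refine = refine_idempotent[OF A en(1,2) I(1) I(2) this, of "ch ?J"]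
    have "ch ?J \<in> I (Suc n)" "ch ?J \<in> {e n \<otimes> r |r. r \<in> carrier R}" using c unfolding P_def by auto
    with refine c show ?thesis unfolding eS P_def by auto
  qed
  have inv: "e n \<in> carrier R \<and> e n \<otimes> e n = e n \<and> e n \<in> I n \<and> I n \<subseteq> principal_plus R (e n) A" for n
  proof (induction n)
    case 0
    then show ?case using ch[OF I(1)] right_ideal_subset[OF I(1)] unfolding e0 by blast
  next
    case (Suc n)
    then show ?case using step by blast
  qed
  have e: "\<And>n. e n \<in> carrier R" "\<And>n. e n \<otimes> e n = e n"
    and rel: "\<And>n. e n \<otimes> e (Suc n) = e (Suc n)" "\<And>n. e (Suc n) \<otimes> e n = e (Suc n)"
    using inv step by auto
  define g where "g n = e n \<ominus> e (Suc n)" for n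
  have "orthogonal_idempotents R g"
    unfolding g_def using decreasing_idempotents_orth[of e, OF e rel] .
  moreover have "g n \<notin> A" if drop: "I n \<noteq> I (Suc n)" for n
  proof
    assume gA: "g n \<in> A"
    have "I n \<subseteq> I (Suc n)"
    proof
      fix x assume "x \<in> I n"
      then obtain r a where ra: "r \<in> carrier R" "a \<in> A" "x = e n \<otimes> r \<oplus> a"
        using inv unfolding principal_plus_def by blast
      have "x = e (Suc n) \<otimes> r \<oplus> (g n \<otimes> r \<oplus> a)"
        unfolding ra(3) g_def using e ra(1) ideal.Icarr[OF A ra(2)] by (simp add: ring_simprules)
      moreover have "e (Suc n) \<otimes> r \<in> I (Suc n)"
        using right_ideal_mult[OF I(1) _ ra(1)] inv by blast
      moreover have "g n \<otimes> r \<oplus> a \<in> I (Suc n)"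
        using ideal.I_r_closed[OF A gA ra(1)] ra(2) I(2) right_ideal_add[OF I(1)] by blast
      ultimately show "x \<in> I (Suc n)" using right_ideal_add[OF I(1)] by simp
    qed
    then show False using dec[of n] drop by blast
  qed
  ultimately show thesis by (rule that)
qed

end

lemma not_eventually_constant_infinite_changes:
  fixes I :: "nat \<Rightarrow> 'x"
  assumes nc: "\<not> (\<exists>n. \<forall>m\<ge>n. I m = I n)"
  shows "infinite {n. I n \<noteq> I (Suc n)}"
proof
  assume fin: "finite {n. I n \<noteq> I (Suc n)}"
  obtain B where B: "\<forall>n\<in>{n. I n \<noteq> I (Suc n)}. n < B"
    using finite_nat_set_iff_bounded[THEN iffD1, OF fin] by (elim exE)
  have "I m = I B" if "B \<le> m" for m
    using that
  proof (induction m rule: dec_induct)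
    case (step k)
    have "k \<notin> {n. I n \<noteq> I (Suc n)}" using B step.hyps(1) by auto
    then show ?case using step.IH by simp
  qed simp
  then have "\<exists>n. \<forall>m\<ge>n. I m = I n" by blast
  then show False using nc by contradiction
qed

context ring begin

text \<open>Otherwise either some right ideal is not of the form eR + Ann M, or a strictly
  descending chain splits into idempotents; both give infinitely many orthogonal
  idempotents outside Ann M.\<close>

lemma sigma_imp_dcc:
  assumes reg: "von_neumann_regular R" and M: "right_module R M"
    and inf: "infinite (UNIV :: 'i set)" and sig: "sigma_aleph0_injective TYPE('i) R M"
  shows "dcc_above R (Ann R M)"
proof (rule ccontr)
  assume "\<not> dcc_above R (Ann R M)"
  then obtain I :: "nat \<Rightarrow> 'a set" where I: "\<And>n. right_ideal (I n) R" "\<And>n. Ann R M \<subseteq> I n"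
    and dec: "\<And>n. I (Suc n) \<subseteq> I n" and nc: "\<not> (\<exists>n. \<forall>m\<ge>n. I m = I n)"
    unfolding dcc_above_def by blast
  have A: "ideal (Ann R M) R" by (rule Ann_ideal[OF M])
  obtain g where og: "orthogonal_idempotents R g" and infA: "infinite {k. g k \<notin> Ann R M}"
  proof (cases "\<exists>J. right_ideal J R \<and> (\<forall>e\<in>J. e \<otimes> e = e \<longrightarrow> \<not> J \<subseteq> principal_plus R e (Ann R M))")
    case True
    then obtain J where J: "right_ideal J R"
      and nonsplit: "\<forall>e\<in>J. e \<otimes> e = e \<longrightarrow> \<not> J \<subseteq> principal_plus R e (Ann R M)" by blast
    obtain g where "orthogonal_idempotents R g" "\<And>k. g k \<notin> Ann R M"
      using orthogonal_idempotents_of_nonsplit_ideal[OF reg A J nonsplit] by blast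
    then show thesis using that by simp
  next
    case False
    then have split: "\<forall>J. right_ideal J R \<longrightarrow>
        (\<exists>e\<in>J. e \<otimes> e = e \<and> J \<subseteq> principal_plus R e (Ann R M))"
      by blast
    obtain g where og: "orthogonal_idempotents R g"
      and drop: "\<And>n. I n \<noteq> I (Suc n) \<Longrightarrow> g n \<notin> Ann R M"
      using orthogonal_idempotents_of_descending_chain[of "Ann R M" I, OF A split I dec] by blast
    have "{n. I n \<noteq> I (Suc n)} \<subseteq> {k. g k \<notin> Ann R M}" using drop by blast
    then have "infinite {k. g k \<notin> Ann R M}"
      using not_eventually_constant_infinite_changes[OF nc] by (rule infinite_super)
    then show thesis using that og by blast
  qed
  have "\<not> sigma_aleph0_injective TYPE('i) R M"
    by (rule orthogonal_idempotents_not_sigma[OF M inf og infA])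
  then show False using sig by contradiction
qed

end

theorem lemma3p4:
  fixes R :: "('a, 'c) ring_scheme" and M :: "('a, 'b, 'd) rmodule_scheme"
  assumes "von_neumann_regular R"
    and "right_module R M"
    and "infinite (UNIV :: 'i set)"
  shows "sigma_aleph0_injective TYPE('i) R M \<longleftrightarrow> artinian_ring (R Quot (Ann R M))"
proof -
  interpret ring R using assms(1) unfolding von_neumann_regular_def by blast
  have artinian_iff: "artinian_ring (R Quot (Ann R M)) \<longleftrightarrow> dcc_above R (Ann R M)"
    by (rule artinian_quotient_iff_dcc_above[OF Ann_ideal[OF assms(2)]])
  show ?thesis
  proof
    assume "sigma_aleph0_injective TYPE('i) R M"
    then have "dcc_above R (Ann R M)" by (rule sigma_imp_dcc[OF assms])
    then show "artinian_ring (R Quot (Ann R M))" using artinian_iff by blast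
  next
    assume "artinian_ring (R Quot (Ann R M))"
    then have dcc: "dcc_above R (Ann R M)" using artinian_iff by blast
    have "aleph0_injective R (dsum M \<Lambda>)" for \<Lambda> :: "'i set"
    proof (rule dcc_imp_aleph0_injective[OF assms(1) dsum_right_module[OF assms(2)]])
      show "dcc_above R (Ann R (dsum M \<Lambda>))" using dcc Ann_dsum by (rule dcc_above_mono)
    qed
    then show "sigma_aleph0_injective TYPE('i) R M" unfolding sigma_aleph0_injective_def by blast
  qed
qed

end
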